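(* Let $A\in\mathbb{R}^{n\times r}$, $L\in\mathbb{R}^{s\times n}$ and $0<\alpha\le\beta$ be such that $\alpha\|Ay\|_1\le\|LAy\|_1\le\beta\|Ay\|_1$ for all $y\in\mathbb{R}^r$. Then for every integer $t\ge1$ and every $X\in\mathbb{R}^{r\times t}$, $$\frac{\alpha}{2}\|AX\|_{1,2}\le\|LAX\|_{1,2}\le2\beta\|AX\|_{1,2}.$$
   Context: For a matrix $M$, $\|M\|_{1,2}=\sum_i\|M_{i*}\|_2$ is the sum of Euclidean norms of its rows. *)

theory Defs
  imports "HOL-Analysis.Analysis"
begin

definition l1norm :: "real ^ 'n \<Rightarrow> real" where
  "l1norm v = (\<Sum>i\<in>UNIV. \<bar>v $ i\<bar>)"

definition norm12 :: "real ^ 'c ^ 'r \<Rightarrow> real" where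
  "norm12 M = (\<Sum>i\<in>UNIV. sqrt (\<Sum>j\<in>UNIV. (M $ i $ j)\<^sup>2))"

end

theory Submission
  imports Defs
begin

text \<open>Average over all sign vectors \<open>\<epsilon> \<in> {-1,1}\<^sup>t\<close>. For a row \<open>v\<close> put
\<open>S(\<epsilon>) = \<Sum>\<^sub>j \<epsilon>\<^sub>j v\<^sub>j\<close>; then \<open>E S\<^sup>2 = |v|\<^sup>2\<close> and \<open>E S\<^sup>4 \<le> 3 |v|\<^sup>4\<close>, and the moment
interpolation \<open>(E S\<^sup>2)\<^sup>3 \<le> (E |S|)\<^sup>2 E S\<^sup>4\<close> yields Khintchine's inequality
\<open>|v| / sqrt 3 \<le> E |S| \<le> |v|\<close>. Summing over the rows, the mean of \<open>l1norm (M \<epsilon>)\<close> lies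
between \<open>norm12 M / sqrt 3\<close> and \<open>norm12 M\<close>. Applying the hypothesis to \<open>y = X \<epsilon>\<close> and
averaging over \<open>\<epsilon>\<close> therefore proves the theorem with the constant \<open>sqrt 3 \<le> 2\<close>.\<close>

definition sign_of :: "bool \<Rightarrow> real" where
  "sign_of b = (if b then 1 else -1)"

definition rademacher_sum :: "'a set \<Rightarrow> ('a \<Rightarrow> real) \<Rightarrow> ('a \<Rightarrow> bool) \<Rightarrow> real" where
  "rademacher_sum J v e = (\<Sum>j\<in>J. sign_of (e j) * v j)"

lemma sign_of_power2 [simp]: "(sign_of b)\<^sup>2 = 1"
  and sign_of_power3 [simp]: "sign_of b ^ 3 = sign_of b"
  and sign_of_power4 [simp]: "sign_of b ^ 4 = 1"
  by (auto simp: sign_of_def)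

lemma rademacher_sum_insert:
  "finite J \<Longrightarrow> a \<notin> J \<Longrightarrow>
    rademacher_sum (insert a J) v e = rademacher_sum J v e + sign_of (e a) * v a"
  by (simp add: rademacher_sum_def)

lemma sum_rademacher_sum_times_sign_eq_0:
  fixes J :: "'a::finite set"
  assumes "a \<notin> J"
  shows "(\<Sum>e\<in>UNIV. g (rademacher_sum J v e) * sign_of (e a)) = 0"
proof -
  define flip where "flip = (\<lambda>e::'a \<Rightarrow> bool. e(a := \<not> e a))"
  have flip_flip: "flip (flip e) = e" for e
    by (auto simp: flip_def)
  have sum_flip: "rademacher_sum J v (flip e) = rademacher_sum J v e" for e
    unfolding rademacher_sum_def flip_def using assms by (intro sum.cong) auto
  have sign_flip: "sign_of (flip e a) = - sign_of (e a)" for e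
    by (auto simp: flip_def sign_of_def)
  have "(\<Sum>e\<in>UNIV. g (rademacher_sum J v e) * sign_of (e a))
      = (\<Sum>e\<in>UNIV. g (rademacher_sum J v (flip e)) * sign_of (flip e a))"
    by (rule sum.reindex_bij_witness[where i = flip and j = flip]) (auto simp: flip_flip)
  also have "\<dots> = - (\<Sum>e\<in>UNIV. g (rademacher_sum J v e) * sign_of (e a))"
    by (simp add: sum_flip sign_flip sum_negf)
  finally show ?thesis
    by simp
qed

lemma sum_rademacher_sum_power2:
  fixes J :: "'a::finite set"
  assumes "finite J"
  shows "(\<Sum>e\<in>UNIV. (rademacher_sum J v e)\<^sup>2) = real CARD('a \<Rightarrow> bool) * (\<Sum>j\<in>J. (v j)\<^sup>2)"
  using assms
proof (induction J rule: finite_induct)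
  case empty
  then show ?case
    by (simp add: rademacher_sum_def)
next
  case (insert a J)
  have expand: "(rademacher_sum (insert a J) v e)\<^sup>2 = (rademacher_sum J v e)\<^sup>2
      + 2 * v a * (rademacher_sum J v e * sign_of (e a)) + (v a)\<^sup>2 * (sign_of (e a))\<^sup>2" for e
    using insert.hyps by (simp add: rademacher_sum_insert power2_eq_square algebra_simps)
  have "(\<Sum>e\<in>UNIV. rademacher_sum J v e * sign_of (e a)) = 0"
    using sum_rademacher_sum_times_sign_eq_0[OF insert.hyps(2), of "\<lambda>x. x"] by simp
  then show ?case
    unfolding expand sum.distrib using insert
    by (simp add: sum_distrib_left[symmetric] algebra_simps)
qed

lemma sum_rademacher_sum_power4_le:
  fixes J :: "'a::finite set"
  assumes "finite J"
  shows "(\<Sum>e\<in>UNIV. (rademacher_sum J v e) ^ 4)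
    \<le> 3 * real CARD('a \<Rightarrow> bool) * (\<Sum>j\<in>J. (v j)\<^sup>2)\<^sup>2"
  using assms
proof (induction J rule: finite_induct)
  case empty
  then show ?case
    by (simp add: rademacher_sum_def)
next
  case (insert a J)
  define N where "N = real CARD('a \<Rightarrow> bool)"
  define Q where "Q = (\<Sum>j\<in>J. (v j)\<^sup>2)"
  let ?S = "rademacher_sum J v"
  have expand: "(rademacher_sum (insert a J) v e) ^ 4 = (?S e) ^ 4
      + 4 * v a * ((?S e) ^ 3 * sign_of (e a)) + 6 * (v a)\<^sup>2 * (?S e)\<^sup>2 * (sign_of (e a))\<^sup>2
      + 4 * (v a) ^ 3 * (?S e * sign_of (e a) ^ 3) + (v a) ^ 4 * sign_of (e a) ^ 4" for e
    using insert.hyps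
    by (simp del: sign_of_power2 sign_of_power3 sign_of_power4
        add: rademacher_sum_insert power2_eq_square power3_eq_cube power4_eq_xxxx algebra_simps)
  have odd1: "(\<Sum>e\<in>UNIV. ?S e * sign_of (e a)) = 0"
    using sum_rademacher_sum_times_sign_eq_0[OF insert.hyps(2), of "\<lambda>x. x"] by simp
  have odd3: "(\<Sum>e\<in>UNIV. (?S e) ^ 3 * sign_of (e a)) = 0"
    using sum_rademacher_sum_times_sign_eq_0[OF insert.hyps(2), of "\<lambda>x. x ^ 3"] by simp
  have "(\<Sum>e\<in>UNIV. (rademacher_sum (insert a J) v e) ^ 4)
      = (\<Sum>e\<in>UNIV. (?S e) ^ 4) + 6 * (v a)\<^sup>2 * (N * Q) + N * (v a) ^ 4"
    unfolding expand sum.distrib using odd1 odd3 sum_rademacher_sum_power2[OF insert.hyps(1), of v]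
    by (simp add: sum_distrib_left[symmetric] N_def Q_def)
  also have "\<dots> \<le> 3 * N * Q\<^sup>2 + 6 * (v a)\<^sup>2 * (N * Q) + N * (v a) ^ 4"
    using insert.IH by (simp add: N_def Q_def)
  also have "\<dots> \<le> 3 * N * (Q + (v a)\<^sup>2)\<^sup>2"
  proof -
    have "3 * N * (Q + (v a)\<^sup>2)\<^sup>2
        = 3 * N * Q\<^sup>2 + 6 * (v a)\<^sup>2 * (N * Q) + N * (v a) ^ 4 + 2 * (N * (v a) ^ 4)"
      by algebra
    then show ?thesis
      by (simp add: N_def)
  qed
  finally show ?case
    using insert.hyps by (simp add: N_def Q_def add.commute)
qed

lemma sum_power2_cube_le:
  fixes f :: "'a \<Rightarrow> real"
  shows "(\<Sum>i\<in>I. (f i)\<^sup>2) ^ 3 \<le> (\<Sum>i\<in>I. \<bar>f i\<bar>)\<^sup>2 * (\<Sum>i\<in>I. (f i) ^ 4)"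
proof -
  define M1 where "M1 = (\<Sum>i\<in>I. \<bar>f i\<bar>)"
  define M2 where "M2 = (\<Sum>i\<in>I. (f i)\<^sup>2)"
  define M3 where "M3 = (\<Sum>i\<in>I. \<bar>f i\<bar> ^ 3)"
  define M4 where "M4 = (\<Sum>i\<in>I. (f i) ^ 4)"
  have "M2 = (\<Sum>i\<in>I. sqrt \<bar>f i\<bar> * (sqrt \<bar>f i\<bar> * \<bar>f i\<bar>))"
    unfolding M2_def by (intro sum.cong refl) (simp flip: mult.assoc add: power2_eq_square)
  then have "M2\<^sup>2 \<le> (\<Sum>i\<in>I. (sqrt \<bar>f i\<bar>)\<^sup>2) * (\<Sum>i\<in>I. (sqrt \<bar>f i\<bar> * \<bar>f i\<bar>)\<^sup>2)"
    by (simp only: Cauchy_Schwarz_ineq_sum)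
  also have "\<dots> = M1 * M3"
  proof -
    have "(sqrt \<bar>x\<bar> * \<bar>x\<bar>)\<^sup>2 = \<bar>x\<bar> ^ 3" for x :: real
      by (simp add: power_mult_distrib) (simp add: power2_eq_square power3_eq_cube)
    then show ?thesis
      unfolding M1_def M3_def by simp
  qed
  finally have M2_le: "M2\<^sup>2 \<le> M1 * M3" .
  have "M3 = (\<Sum>i\<in>I. \<bar>f i\<bar> * (f i)\<^sup>2)"
    unfolding M3_def by (simp add: power2_eq_square power3_eq_cube ac_simps)
  then have "M3\<^sup>2 \<le> (\<Sum>i\<in>I. \<bar>f i\<bar>\<^sup>2) * (\<Sum>i\<in>I. ((f i)\<^sup>2)\<^sup>2)"
    by (simp only: Cauchy_Schwarz_ineq_sum)
  then have M3_le: "M3\<^sup>2 \<le> M2 * M4"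
    unfolding M2_def M4_def by simp
  have M2_nonneg: "M2 \<ge> 0"
    unfolding M2_def by (simp add: sum_nonneg)
  have "M2 * M2 ^ 3 = (M2\<^sup>2)\<^sup>2"
    by algebra
  also have "\<dots> \<le> (M1 * M3)\<^sup>2"
    using M2_le by (intro power_mono) auto
  also have "\<dots> = M1\<^sup>2 * M3\<^sup>2"
    by (simp add: power_mult_distrib)
  also have "\<dots> \<le> M1\<^sup>2 * (M2 * M4)"
    using M3_le by (simp add: mult_left_mono)
  finally have "M2 * M2 ^ 3 \<le> M2 * (M1\<^sup>2 * M4)"
    by (simp add: algebra_simps)
  moreover have "M4 \<ge> 0"
    unfolding M4_def by (simp add: sum_nonneg)
  ultimately show ?thesis
    using M2_nonneg unfolding M1_def [symmetric] M2_def [symmetric] M4_def [symmetric]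
    by (cases "M2 = 0") (simp_all add: mult_le_cancel_left_pos)
qed

lemma khintchine_l1_lower:
  fixes v :: "'a::finite \<Rightarrow> real"
  shows "real CARD('a \<Rightarrow> bool) * sqrt (\<Sum>j\<in>UNIV. (v j)\<^sup>2)
    \<le> sqrt 3 * (\<Sum>e\<in>UNIV. \<bar>rademacher_sum UNIV v e\<bar>)"
proof -
  define N where "N = real CARD('a \<Rightarrow> bool)"
  define Q where "Q = (\<Sum>j\<in>UNIV. (v j)\<^sup>2)"
  define P where "P = (\<Sum>e\<in>UNIV. \<bar>rademacher_sum UNIV v e\<bar>)"
  have N_pos: "N > 0" and Q_nonneg: "Q \<ge> 0" and P_nonneg: "P \<ge> 0"
    unfolding N_def Q_def P_def by (simp_all add: sum_nonneg)
  have "(N * Q) ^ 3 \<le> P\<^sup>2 * (\<Sum>e\<in>UNIV. (rademacher_sum UNIV v e) ^ 4)"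
    using sum_power2_cube_le[of "rademacher_sum UNIV v" UNIV]
    by (simp add: sum_rademacher_sum_power2 N_def Q_def P_def)
  also have "\<dots> \<le> P\<^sup>2 * (3 * N * Q\<^sup>2)"
    using sum_rademacher_sum_power4_le[of UNIV v] by (simp add: mult_left_mono N_def Q_def)
  finally have moments: "(N * Q) ^ 3 \<le> P\<^sup>2 * (3 * N * Q\<^sup>2)" .
  have "N * sqrt Q \<le> sqrt 3 * P"
  proof (cases "Q = 0")
    case True
    then show ?thesis
      using P_nonneg by simp
  next
    case False
    have "(N * Q\<^sup>2) * (N * sqrt Q)\<^sup>2 = (N * Q) ^ 3"
      using Q_nonneg by (simp add: power_mult_distrib power2_eq_square power3_eq_cube)
    moreover have "(N * Q\<^sup>2) * (sqrt 3 * P)\<^sup>2 = P\<^sup>2 * (3 * N * Q\<^sup>2)"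
      by (simp add: power_mult_distrib)
    moreover have "N * Q\<^sup>2 > 0"
      using N_pos False by simp
    ultimately have "(N * sqrt Q)\<^sup>2 \<le> (sqrt 3 * P)\<^sup>2"
      using moments by (metis mult_le_cancel_left_pos)
    then show ?thesis
      by (rule power2_le_imp_le) (simp add: P_nonneg)
  qed
  then show ?thesis
    unfolding N_def Q_def P_def .
qed

lemma khintchine_l1_upper:
  fixes v :: "'a::finite \<Rightarrow> real"
  shows "(\<Sum>e\<in>UNIV. \<bar>rademacher_sum UNIV v e\<bar>)
    \<le> real CARD('a \<Rightarrow> bool) * sqrt (\<Sum>j\<in>UNIV. (v j)\<^sup>2)"
proof -
  define N where "N = real CARD('a \<Rightarrow> bool)"
  define Q where "Q = (\<Sum>j\<in>UNIV. (v j)\<^sup>2)"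
  have "(\<Sum>e\<in>UNIV. 1 * \<bar>rademacher_sum UNIV v e\<bar>)\<^sup>2
      \<le> (\<Sum>e\<in>(UNIV :: ('a \<Rightarrow> bool) set). 1\<^sup>2) * (\<Sum>e\<in>UNIV. \<bar>rademacher_sum UNIV v e\<bar>\<^sup>2)"
    by (rule Cauchy_Schwarz_ineq_sum)
  also have "\<dots> = N * (N * Q)"
    using sum_rademacher_sum_power2[of UNIV v] by (simp add: N_def Q_def)
  also have "\<dots> = (N * sqrt Q)\<^sup>2"
    by (simp add: Q_def sum_nonneg power_mult_distrib power2_eq_square)
  finally have "(\<Sum>e\<in>UNIV. \<bar>rademacher_sum UNIV v e\<bar>)\<^sup>2 \<le> (N * sqrt Q)\<^sup>2"
    by simp
  then show ?thesis
    unfolding N_def Q_def by (rule power2_le_imp_le) (simp add: sum_nonneg)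
qed

lemma norm12_nonneg: "norm12 M \<ge> 0"
  by (simp add: norm12_def sum_nonneg)

definition sign_vector :: "('t \<Rightarrow> bool) \<Rightarrow> real ^ 't" where
  "sign_vector e = (\<chi> j. sign_of (e j))"

lemma sum_l1norm_sign_vector:
  fixes M :: "real ^ 't ^ 'm"
  shows "(\<Sum>e\<in>UNIV. l1norm (M *v sign_vector e))
    = (\<Sum>i\<in>UNIV. \<Sum>e\<in>UNIV. \<bar>rademacher_sum UNIV (\<lambda>j. M $ i $ j) e\<bar>)"
  unfolding l1norm_def matrix_vector_mult_def rademacher_sum_def sign_vector_def
  by (subst sum.swap) (simp add: mult.commute)

lemma norm12_le_sum_l1norm_sign_vector:
  fixes M :: "real ^ 't ^ 'm"
  shows "real CARD('t \<Rightarrow> bool) * norm12 M \<le> sqrt 3 * (\<Sum>e\<in>UNIV. l1norm (M *v sign_vector e))"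
  unfolding sum_l1norm_sign_vector norm12_def
  by (subst (1 2) sum_distrib_left) (intro sum_mono khintchine_l1_lower)

lemma sum_l1norm_sign_vector_le_norm12:
  fixes M :: "real ^ 't ^ 'm"
  shows "(\<Sum>e\<in>UNIV. l1norm (M *v sign_vector e)) \<le> real CARD('t \<Rightarrow> bool) * norm12 M"
  unfolding sum_l1norm_sign_vector norm12_def sum_distrib_left
  by (intro sum_mono khintchine_l1_upper)

lemma norm12_le_if_l1norm_le:
  fixes M :: "real ^ 't ^ 'm" and K :: "real ^ 't ^ 'k"
  assumes "c \<ge> 0" and "\<And>x. l1norm (K *v x) \<le> c * l1norm (M *v x)"
  shows "norm12 K \<le> sqrt 3 * c * norm12 M"
proof -
  define N where "N = real CARD('t \<Rightarrow> bool)"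
  have "N * norm12 K \<le> sqrt 3 * (\<Sum>e\<in>UNIV. l1norm (K *v sign_vector e))"
    unfolding N_def by (rule norm12_le_sum_l1norm_sign_vector)
  also have "\<dots> \<le> sqrt 3 * (c * (\<Sum>e\<in>UNIV. l1norm (M *v sign_vector e)))"
    using assms(2) by (simp add: sum_distrib_left sum_mono)
  also have "\<dots> \<le> sqrt 3 * (c * (N * norm12 M))"
    using assms(1) unfolding N_def
    by (intro mult_left_mono sum_l1norm_sign_vector_le_norm12) simp_all
  finally show ?thesis
    by (simp add: N_def algebra_simps)
qed

theorem mainTheorem7:
  fixes A :: "real ^ 'r ^ 'n" and L :: "real ^ 'n ^ 's"
    and X :: "real ^ 't ^ 'r" and \<alpha> \<beta> :: real
  assumes "0 < \<alpha>" and "\<alpha> \<le> \<beta>"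
    and "\<And>y :: real ^ 'r. \<alpha> * l1norm (A *v y) \<le> l1norm (L *v (A *v y))
             \<and> l1norm (L *v (A *v y)) \<le> \<beta> * l1norm (A *v y)"
  shows "\<alpha> / 2 * norm12 (A ** X) \<le> norm12 (L ** A ** X)
         \<and> norm12 (L ** A ** X) \<le> 2 * \<beta> * norm12 (A ** X)"
proof -
  have apply_X: "(L ** A ** X) *v x = L *v (A *v (X *v x))" "(A ** X) *v x = A *v (X *v x)" for x
    by (simp_all add: matrix_vector_mul_assoc matrix_mul_assoc)
  have sqrt3_le_2: "sqrt 3 \<le> (2 :: real)"
    by (simp add: real_sqrt_le_iff')
  have "norm12 (A ** X) \<le> sqrt 3 * (1 / \<alpha>) * norm12 (L ** A ** X)"
    using assms(1,3) by (intro norm12_le_if_l1norm_le) (simp_all add: apply_X field_simps)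
  then have "\<alpha> * norm12 (A ** X) \<le> sqrt 3 * norm12 (L ** A ** X)"
    using assms(1) by (simp add: field_simps)
  also have "\<dots> \<le> 2 * norm12 (L ** A ** X)"
    using sqrt3_le_2 norm12_nonneg by (rule mult_right_mono)
  finally have lower: "\<alpha> / 2 * norm12 (A ** X) \<le> norm12 (L ** A ** X)"
    by simp
  have "norm12 (L ** A ** X) \<le> sqrt 3 * \<beta> * norm12 (A ** X)"
    using assms by (intro norm12_le_if_l1norm_le) (simp_all add: apply_X)
  also have "\<dots> \<le> 2 * \<beta> * norm12 (A ** X)"
    using assms(1,2) sqrt3_le_2 norm12_nonneg by (intro mult_right_mono) simp_all
  finally show ?thesis
    using lower by simp
qed

end
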